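(* Assume the cost $c$ is outcome monotonic. For every classifier $f:\mathcal X\to\{0,1\}$ that accepts at least one point (and for which $\tau(f):=\min_{x: f(x)=1}\ell(x)$ is attained), the outcome threshold classifier $f'(x)=\mathbf 1[\ell(x)\ge \tau(f)]$ satisfies $\mathcal U(f)=\mathcal U(f')$ and $\mathcal B(f)=\mathcal B(f')$.
   Context: Setting: features $x\in\mathcal X$, labels $y\in\{0,1\}$, joint distribution of $(X,Y)$; outcome likelihood $\ell(x)=\Pr[Y=1\mid X=x]>0$ for all $x$. Outcome monotonic cost $c:\mathcal X\times\mathcal X\to\mathbb R_{\ge0}$: for all $x,x',x^*$, (i) $c(x,x')>0$ iff $\ell(x')>\ell(x)$; (ii) $c(x,x^* )>c(x',x^* )>0$ iff $\ell(x^* )>\ell(x')>\ell(x)$; (iii) $c(x,x^* )>c(x,x')>0$ iff $\ell(x^* )>\ell(x')>\ell(x)$. Given a classifier $f:\mathcal X\to\{0,1\}$, an individual with features $x$ has utility $u_x(f,x')=f(x')-c(x,x')$ for moving to $x'$. Best response $\Delta(x)=\Delta(x;f)$: if $f(x)=1$, or if no maximizer $x'$ of $u_x(f,\cdot)$ has $f(x')=1$, then $\Delta(x)=x$; otherwise $\Delta(x)$ is an arbitrary maximizer $x'$ of $u_x(f,\cdot)$ with $f(x')=1$. (Thus an individual with $f(x)=0$ ends up accepted iff some $x'$ with $f(x')=1$ has $c(x,x')\le 1$.) Strategic (institutional) utility: $\mathcal U(f)=\Pr[f(\Delta(X))=Y]$. Individual burden $b_f(x)=\min_{x': f(x')=1}c(x,x')$;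 social burden $\mathcal B(f)=\mathbb E[b_f(X)\mid Y=1]$. All minima appearing are assumed attained. An outcome threshold classifier is $f_\tau(x)=\mathbf 1[\ell(x)\ge\tau]$, $\tau\in[0,1]$. *)

theory Defs
  imports "HOL-Probability.Probability"
begin

text \<open>The outcome likelihood is a (version of the) conditional probability Pr[Y=1 | X=x].\<close>

definition outcome_likelihood ::
  "'w measure \<Rightarrow> 'x measure \<Rightarrow> ('w \<Rightarrow> 'x) \<Rightarrow> ('w \<Rightarrow> bool) \<Rightarrow> ('x \<Rightarrow> real) \<Rightarrow> bool" where
  "outcome_likelihood M S X Y l \<longleftrightarrow>
     l \<in> borel_measurable S \<and>
     (\<forall>A\<in>sets S. measure M {w\<in>space M. X w \<in> A \<and> Y w}
                  = (\<integral>w. indicator A (X w) * l (X w) \<partial>M))"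

definition outcome_monotonic :: "('x \<Rightarrow> real) \<Rightarrow> ('x \<Rightarrow> 'x \<Rightarrow> real) \<Rightarrow> bool" where
  "outcome_monotonic l c \<longleftrightarrow>
     (\<forall>x x'. c x x' \<ge> 0) \<and>
     (\<forall>x x'. c x x' > 0 \<longleftrightarrow> l x' > l x) \<and>
     (\<forall>x x' xs. (c x xs > c x' xs \<and> c x' xs > 0) \<longleftrightarrow> (l xs > l x' \<and> l x' > l x)) \<and>
     (\<forall>x x' xs. (c x xs > c x x' \<and> c x x' > 0) \<longleftrightarrow> (l xs > l x' \<and> l x' > l x))"

definition utility :: "('x \<Rightarrow> 'x \<Rightarrow> real) \<Rightarrow> ('x \<Rightarrow> bool) \<Rightarrow> 'x \<Rightarrow> 'x \<Rightarrow> real" where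
  "utility c f x x' = of_bool (f x') - c x x'"

definition is_maximizer :: "('x \<Rightarrow> 'x \<Rightarrow> real) \<Rightarrow> ('x \<Rightarrow> bool) \<Rightarrow> 'x \<Rightarrow> 'x \<Rightarrow> bool" where
  "is_maximizer c f x x' \<longleftrightarrow> (\<forall>z. utility c f x z \<le> utility c f x x')"

definition best_response :: "('x \<Rightarrow> 'x \<Rightarrow> real) \<Rightarrow> ('x \<Rightarrow> bool) \<Rightarrow> ('x \<Rightarrow> 'x) \<Rightarrow> bool" where
  "best_response c f \<Delta> \<longleftrightarrow>
     (\<forall>x. if f x \<or> \<not> (\<exists>x'. is_maximizer c f x x' \<and> f x')
          then \<Delta> x = x
          else is_maximizer c f x (\<Delta> x) \<and> f (\<Delta> x))"

definition strategic_utility ::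
  "'w measure \<Rightarrow> ('w \<Rightarrow> 'x) \<Rightarrow> ('w \<Rightarrow> bool) \<Rightarrow> ('x \<Rightarrow> bool) \<Rightarrow> ('x \<Rightarrow> 'x) \<Rightarrow> real" where
  "strategic_utility M X Y f \<Delta> = measure M {w\<in>space M. f (\<Delta> (X w)) = Y w}"

definition individual_burden :: "('x \<Rightarrow> 'x \<Rightarrow> real) \<Rightarrow> ('x \<Rightarrow> bool) \<Rightarrow> 'x \<Rightarrow> real" where
  "individual_burden c f x = Inf {c x x' | x'. f x'}"

text \<open>E[b_f(X) | Y = 1] = E[b_f(X) 1{Y=1}] / Pr[Y=1].\<close>
definition social_burden ::
  "'w measure \<Rightarrow> ('w \<Rightarrow> 'x) \<Rightarrow> ('w \<Rightarrow> bool) \<Rightarrow> ('x \<Rightarrow> 'x \<Rightarrow> real) \<Rightarrow> ('x \<Rightarrow> bool) \<Rightarrow> real" where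
  "social_burden M X Y c f =
     (\<integral>w. of_bool (Y w) * individual_burden c f (X w) \<partial>M) / measure M {w\<in>space M. Y w}"

definition threshold_classifier :: "('x \<Rightarrow> real) \<Rightarrow> real \<Rightarrow> 'x \<Rightarrow> bool" where
  "threshold_classifier l t x \<longleftrightarrow> l x \<ge> t"

definition tau :: "('x \<Rightarrow> real) \<Rightarrow> ('x \<Rightarrow> bool) \<Rightarrow> real" where
  "tau l f = Inf (l ` {x. f x})"

end

theory Submission
  imports Defs
begin

text \<open>Under an outcome monotonic cost, moving to a point of higher likelihood is never
  cheaper. Hence, for any classifier with an accepted point x0 of least likelihood, x0 is a
  cheapest accepted destination for everybody: the individual burden at x is c x x0, and a
  best response ends up accepted iff c x x0 \<le> 1. Both therefore depend on the classifier
  only through x0, and f shares this point with the threshold classifier at \<tau>(f).\<close>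

lemma outcome_monotonic_cost_nonneg:
  "outcome_monotonic l c \<Longrightarrow> 0 \<le> c x x'"
  unfolding outcome_monotonic_def by blast

lemma outcome_monotonic_cost_eq_0_iff:
  assumes "outcome_monotonic l c"
  shows "c x x' = 0 \<longleftrightarrow> l x' \<le> l x"
proof -
  have "0 \<le> c x x'" "c x x' > 0 \<longleftrightarrow> l x' > l x"
    using assms unfolding outcome_monotonic_def by blast+
  then show ?thesis by linarith
qed

lemma outcome_monotonic_cost_mono:
  assumes om: "outcome_monotonic l c" and "l x0 \<le> l z"
  shows "c x x0 \<le> c x z"
proof (cases "l z \<le> l x")
  case True
  then have "c x x0 = 0" using \<open>l x0 \<le> l z\<close> outcome_monotonic_cost_eq_0_iff[OF om] by simp
  then show ?thesis using outcome_monotonic_cost_nonneg[OF om] by simp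
next
  case False
  have "c x x0 > c x z \<and> c x z > 0 \<longleftrightarrow> l x0 > l z \<and> l z > l x"
    using om unfolding outcome_monotonic_def by blast
  moreover have "c x z > 0"
    using False outcome_monotonic_cost_eq_0_iff[OF om] outcome_monotonic_cost_nonneg[OF om]
    by (metis order_le_less)
  ultimately show ?thesis using \<open>l x0 \<le> l z\<close> by auto
qed

definition least_accepted :: "('x \<Rightarrow> real) \<Rightarrow> ('x \<Rightarrow> bool) \<Rightarrow> 'x \<Rightarrow> bool" where
  "least_accepted l g x0 \<longleftrightarrow> g x0 \<and> (\<forall>z. g z \<longrightarrow> l x0 \<le> l z)"

lemma least_accepted_cost_le:
  assumes "outcome_monotonic l c" and "least_accepted l g x0" and "g z"
  shows "c x x0 \<le> c x z"
proof -
  have "l x0 \<le> l z" using assms(2,3) unfolding least_accepted_def by blast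
  then show ?thesis using outcome_monotonic_cost_mono[OF assms(1)] by blast
qed

lemma individual_burden_least_accepted:
  assumes om: "outcome_monotonic l c" and x0: "least_accepted l g x0"
  shows "individual_burden c g x = c x x0"
  unfolding individual_burden_def
proof (rule cInf_eq_minimum)
  show "c x x0 \<in> {c x x' |x'. g x'}" using x0 unfolding least_accepted_def by blast
next
  fix y assume "y \<in> {c x x' |x'. g x'}"
  then obtain z where "g z" "y = c x z" by blast
  then show "c x x0 \<le> y" using least_accepted_cost_le[OF om x0] by simp
qed

lemma best_response_accepted_iff:
  assumes om: "outcome_monotonic l c" and x0: "least_accepted l g x0"
    and br: "best_response c g \<Delta>"
  shows "g (\<Delta> x) \<longleftrightarrow> c x x0 \<le> 1"
proof -
  have "g x0" using x0 unfolding least_accepted_def by blast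
  have cheapest: "\<And>z. g z \<Longrightarrow> c x x0 \<le> c x z"
    using least_accepted_cost_le[OF om x0] .
  note \<Delta>x = br[unfolded best_response_def, rule_format, of x]
  consider "g x" | "\<not> g x" "c x x0 \<le> 1" | "\<not> g x" "\<not> c x x0 \<le> 1" by blast
  then show ?thesis
  proof cases
    case 1
    then have "l x0 \<le> l x" using x0 unfolding least_accepted_def by blast
    then have "c x x0 = 0" using outcome_monotonic_cost_eq_0_iff[OF om] by simp
    moreover have "\<Delta> x = x" using \<Delta>x 1 by simp
    ultimately show ?thesis using 1 by simp
  next
    case 2
    have "utility c g x z \<le> utility c g x x0" for z
      using cheapest[of z] outcome_monotonic_cost_nonneg[OF om, of x z] \<open>g x0\<close> 2(2)
      unfolding utility_def by (cases "g z") auto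
    then have "is_maximizer c g x x0" unfolding is_maximizer_def by blast
    with 2(1) \<open>g x0\<close> have "\<not> (g x \<or> \<not> (\<exists>x'. is_maximizer c g x x' \<and> g x'))" by blast
    with \<Delta>x have "g (\<Delta> x)" by simp
    with 2 show ?thesis by simp
  next
    case 3
    have "\<not> is_maximizer c g x z" if "g z" for z
    proof -
      have "c x x = 0" using outcome_monotonic_cost_eq_0_iff[OF om] by simp
      then have "utility c g x z < utility c g x x"
        using cheapest[OF that] 3 that unfolding utility_def by simp
      then show ?thesis unfolding is_maximizer_def by (meson not_le)
    qed
    then have "\<not> (\<exists>x'. is_maximizer c g x x' \<and> g x')" by blast
    with \<Delta>x have "\<Delta> x = x" by simp
    with 3 show ?thesis by simp
  qed
qed

lemma strategic_utility_eq_if_least_accepted: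
  assumes om: "outcome_monotonic l c"
    and "least_accepted l g x0" "best_response c g \<Delta>"
    and "least_accepted l h x0" "best_response c h \<Delta>'"
  shows "strategic_utility M X Y g \<Delta> = strategic_utility M X Y h \<Delta>'"
proof -
  have "g (\<Delta> x) = h (\<Delta>' x)" for x
    using best_response_accepted_iff[OF om assms(2,3)] best_response_accepted_iff[OF om assms(4,5)]
    by simp
  then show ?thesis unfolding strategic_utility_def by simp
qed

lemma social_burden_eq_if_least_accepted:
  assumes om: "outcome_monotonic l c"
    and "least_accepted l g x0" "least_accepted l h x0"
  shows "social_burden M X Y c g = social_burden M X Y c h"
  using individual_burden_least_accepted[OF om assms(2)] individual_burden_least_accepted[OF om assms(3)]
  unfolding social_burden_def by simp

lemma least_accepted_tau:
  assumes pos: "\<forall>x. l x > 0" and "f x0" "l x0 = tau l f"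
  shows "least_accepted l f x0" and "least_accepted l (threshold_classifier l (tau l f)) x0"
proof -
  \<comment> \<open>positivity of l is needed only so that the Inf defining tau is a genuine infimum\<close>
  have "bdd_below (l ` {x. f x})" using pos by (meson bdd_belowI2 less_imp_le)
  then have "l x0 \<le> l z" if "f z" for z
    using that assms(3) cInf_lower[of "l z" "l ` {x. f x}"] unfolding tau_def by simp
  then show "least_accepted l f x0" using assms(2) unfolding least_accepted_def by blast
  show "least_accepted l (threshold_classifier l (tau l f)) x0"
    using assms(3) unfolding least_accepted_def threshold_classifier_def by simp
qed

theorem mainTheorem2:
  fixes M :: "'w measure" and S :: "'x measure"
    and X :: "'w \<Rightarrow> 'x" and Y :: "'w \<Rightarrow> bool"
    and l :: "'x \<Rightarrow> real" and c :: "'x \<Rightarrow> 'x \<Rightarrow> real" and f :: "'x \<Rightarrow> bool"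
  assumes "prob_space M"
    and "X \<in> measurable M S"
    and "Y \<in> measurable M (count_space UNIV)"
    and "outcome_likelihood M S X Y l"
    and "\<forall>x. l x > 0"
    and "outcome_monotonic l c"
    and "\<exists>x. f x \<and> l x = tau l f"
  shows "(\<forall>\<Delta> \<Delta>'. best_response c f \<Delta> \<and> best_response c (threshold_classifier l (tau l f)) \<Delta>'
            \<longrightarrow> strategic_utility M X Y f \<Delta>
                = strategic_utility M X Y (threshold_classifier l (tau l f)) \<Delta>')
         \<and> social_burden M X Y c f = social_burden M X Y c (threshold_classifier l (tau l f))"
proof -
  obtain x0 where "f x0" "l x0 = tau l f" using assms(7) by blast
  note x0 = least_accepted_tau[OF assms(5) this]
  show ?thesis
  proof (intro conjI allI impI, elim conjE)
    fix \<Delta> \<Delta>'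
    assume "best_response c f \<Delta>" "best_response c (threshold_classifier l (tau l f)) \<Delta>'"
    from strategic_utility_eq_if_least_accepted[OF assms(6) x0(1) this(1) x0(2) this(2)]
    show "strategic_utility M X Y f \<Delta>
      = strategic_utility M X Y (threshold_classifier l (tau l f)) \<Delta>'" .
  next
    from social_burden_eq_if_least_accepted[OF assms(6) x0]
    show "social_burden M X Y c f = social_burden M X Y c (threshold_classifier l (tau l f))" .
  qed
qed

end
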